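(* Let $T$ be a tree with $ex(T)\ge1$, and let $g:V(T)\rightarrow[0,1]$ be any minimum resolving function of $T$. Then, for each $v\in M_2(T)$ with $ter(v)=\alpha\ge2$, $g(V(T_v)-\{v\})=\frac{\alpha}{2}$, and $\sum_{v\in M_2(T)}(g(V(T_v))-g(v))=\dim_f(T)$.
   Context: $d(x,y)$ is the distance in the tree. For a function $g$ on $V(T)$ and $U\subseteq V(T)$, $g(U)=\sum_{s\in U}g(s)$. $R\{x,y\}=\{z: d(x,z)\ne d(y,z)\}$; $g:V(T)\to[0,1]$ is a resolving function if $g(R\{x,y\})\ge1$ for all distinct $x,y$; $\dim_f(T)$ is the minimum of $g(V(T))$ over resolving functions, and a minimum resolving function is one attaining it. A leaf is a vertex of degree one; a major vertex has degree at least three. A leaf $\ell$ is a terminal vertex of a major vertex $v$ if $d(\ell,v)<d(\ell,w)$ for every other major vertex $w$. $ter(v)$ is the number of terminal vertices of $v$; an exterior major vertex is a major vertex with $ter(v)>0$. $M(T)$ is the set of exterior major vertices, $ex(T)=|M(T)|$, $M_1(T)=\{w\in M(T): ter(w)=1\}$, $M_2(T)=\{w\in M(T): ter(w)\ge2\}$. For $v\in M(T)$, $T_v$ is the subtree induced by $v$ and all vertices on the paths joining $v$ to its terminal vertices. *)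

theory Defs
  imports Main "HOL-Library.Extended_Real" Complex_Main
begin

definition graph :: "'a set \<Rightarrow> ('a \<Rightarrow> 'a \<Rightarrow> bool) \<Rightarrow> bool" where
  "graph V E \<longleftrightarrow> finite V \<and> (\<forall>x y. E x y \<longrightarrow> x \<in> V \<and> y \<in> V)
     \<and> (\<forall>x y. E x y \<longrightarrow> E y x) \<and> (\<forall>x. \<not> E x x)"

fun walk :: "('a \<Rightarrow> 'a \<Rightarrow> bool) \<Rightarrow> 'a list \<Rightarrow> bool" where
  "walk E [] = False"
| "walk E [x] = True"
| "walk E (x # y # xs) = (E x y \<and> walk E (y # xs))"

definition path :: "('a \<Rightarrow> 'a \<Rightarrow> bool) \<Rightarrow> 'a list \<Rightarrow> 'a \<Rightarrow> 'a \<Rightarrow> bool" where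
  "path E xs x y \<longleftrightarrow> walk E xs \<and> distinct xs \<and> hd xs = x \<and> last xs = y"

definition connected_graph :: "'a set \<Rightarrow> ('a \<Rightarrow> 'a \<Rightarrow> bool) \<Rightarrow> bool" where
  "connected_graph V E \<longleftrightarrow> (\<forall>x\<in>V. \<forall>y\<in>V. \<exists>xs. path E xs x y)"

definition has_cycle :: "('a \<Rightarrow> 'a \<Rightarrow> bool) \<Rightarrow> bool" where
  "has_cycle E \<longleftrightarrow> (\<exists>xs. walk E xs \<and> distinct xs \<and> length xs \<ge> 3 \<and> E (last xs) (hd xs))"

definition tree :: "'a set \<Rightarrow> ('a \<Rightarrow> 'a \<Rightarrow> bool) \<Rightarrow> bool" where
  "tree V E \<longleftrightarrow> graph V E \<and> V \<noteq> {} \<and> connected_graph V E \<and> \<not> has_cycle E"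

definition dist :: "('a \<Rightarrow> 'a \<Rightarrow> bool) \<Rightarrow> 'a \<Rightarrow> 'a \<Rightarrow> nat" where
  "dist E x y = (LEAST n. \<exists>xs. walk E xs \<and> hd xs = x \<and> last xs = y \<and> length xs = Suc n)"

definition degree :: "'a set \<Rightarrow> ('a \<Rightarrow> 'a \<Rightarrow> bool) \<Rightarrow> 'a \<Rightarrow> nat" where
  "degree V E v = card {w \<in> V. E v w}"

definition leaf :: "'a set \<Rightarrow> ('a \<Rightarrow> 'a \<Rightarrow> bool) \<Rightarrow> 'a \<Rightarrow> bool" where
  "leaf V E v \<longleftrightarrow> v \<in> V \<and> degree V E v = 1"

definition major :: "'a set \<Rightarrow> ('a \<Rightarrow> 'a \<Rightarrow> bool) \<Rightarrow> 'a \<Rightarrow> bool" where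
  "major V E v \<longleftrightarrow> v \<in> V \<and> degree V E v \<ge> 3"

definition terminals :: "'a set \<Rightarrow> ('a \<Rightarrow> 'a \<Rightarrow> bool) \<Rightarrow> 'a \<Rightarrow> 'a set" where
  "terminals V E v = {l. leaf V E l \<and>
      (\<forall>w. major V E w \<and> w \<noteq> v \<longrightarrow> dist E l v < dist E l w)}"

definition ter :: "'a set \<Rightarrow> ('a \<Rightarrow> 'a \<Rightarrow> bool) \<Rightarrow> 'a \<Rightarrow> nat" where
  "ter V E v = card (terminals V E v)"

definition ext_major :: "'a set \<Rightarrow> ('a \<Rightarrow> 'a \<Rightarrow> bool) \<Rightarrow> 'a set" where
  "ext_major V E = {v. major V E v \<and> ter V E v > 0}"

definition ex :: "'a set \<Rightarrow> ('a \<Rightarrow> 'a \<Rightarrow> bool) \<Rightarrow> nat" where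
  "ex V E = card (ext_major V E)"

definition M1 :: "'a set \<Rightarrow> ('a \<Rightarrow> 'a \<Rightarrow> bool) \<Rightarrow> 'a set" where
  "M1 V E = {w \<in> ext_major V E. ter V E w = 1}"

definition M2 :: "'a set \<Rightarrow> ('a \<Rightarrow> 'a \<Rightarrow> bool) \<Rightarrow> 'a set" where
  "M2 V E = {w \<in> ext_major V E. ter V E w \<ge> 2}"

definition Tv :: "'a set \<Rightarrow> ('a \<Rightarrow> 'a \<Rightarrow> bool) \<Rightarrow> 'a \<Rightarrow> 'a set" where
  "Tv V E v = {v} \<union> {z. \<exists>l\<in>terminals V E v. \<exists>xs. path E xs v l \<and> z \<in> set xs}"

definition Rset :: "'a set \<Rightarrow> ('a \<Rightarrow> 'a \<Rightarrow> bool) \<Rightarrow> 'a \<Rightarrow> 'a \<Rightarrow> 'a set" where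
  "Rset V E x y = {z \<in> V. dist E x z \<noteq> dist E y z}"

definition resolving_function :: "'a set \<Rightarrow> ('a \<Rightarrow> 'a \<Rightarrow> bool) \<Rightarrow> ('a \<Rightarrow> real) \<Rightarrow> bool" where
  "resolving_function V E g \<longleftrightarrow> (\<forall>z\<in>V. 0 \<le> g z \<and> g z \<le> 1) \<and>
     (\<forall>x\<in>V. \<forall>y\<in>V. x \<noteq> y \<longrightarrow> sum g (Rset V E x y) \<ge> 1)"

definition fdim :: "'a set \<Rightarrow> ('a \<Rightarrow> 'a \<Rightarrow> bool) \<Rightarrow> real" where
  "fdim V E = Inf {sum g V | g. resolving_function V E g}"

definition min_resolving_function :: "'a set \<Rightarrow> ('a \<Rightarrow> 'a \<Rightarrow> bool) \<Rightarrow> ('a \<Rightarrow> real) \<Rightarrow> bool" where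
  "min_resolving_function V E g \<longleftrightarrow> resolving_function V E g \<and> sum g V = fdim V E"

end

(*
  Let v be a vertex of M2 with ter(v) = alpha. The branches of T at v that contain a terminal
  vertex of v (its legs) are paths, pairwise disjoint and contained in T_v - {v}, and two
  neighbours of v on different legs are resolved only by vertices of these two legs. Hence a
  resolving function g has weight at least 1 on any two legs, and so at least alpha/2 on
  T_v - {v}.

  Conversely, the function with value 1/2 on every terminal vertex of a vertex of M2 is
  resolving: if some v in M2 is at different distances from x and y, then all (at least two)
  terminal vertices of v resolve x and y; if no vertex of M2 resolves them, then on either side
  there is a leaf that is a terminal vertex of a vertex of M2 and closer to that side.

  With g minimal and the sets T_v - {v} pairwise disjoint, this gives
    sum (g(T_v - {v})) <= g(V) = dim_f(T) <= sum (ter(v)/2) <= sum (g(T_v - {v})),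
  so all these inequalities are equalities.
*)
theory Submission
  imports Defs
begin

lemma walk_Cons_iff: "walk E (x # xs) \<longleftrightarrow> xs = [] \<or> E x (hd xs) \<and> walk E xs"
  by (cases xs) auto

lemma walk_append:
  "xs \<noteq> [] \<Longrightarrow> ys \<noteq> [] \<Longrightarrow> walk E (xs @ ys) \<longleftrightarrow> walk E xs \<and> walk E ys \<and> E (last xs) (hd ys)"
proof (induction xs)
  case Nil then show ?case by simp
next
  case (Cons x xs)
  then show ?case by (cases "xs = []"; cases ys) (auto simp: walk_Cons_iff)
qed

lemma walk_rev: "(\<And>x y. E x y \<Longrightarrow> E y x) \<Longrightarrow> walk E xs \<Longrightarrow> walk E (rev xs)"
proof (induction xs)
  case Nil then show ?case by simp
next
  case (Cons x xs)
  then show ?case by (cases "xs = []") (auto simp: walk_Cons_iff walk_append last_rev)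
qed

lemma walk_take: "walk E xs \<Longrightarrow> 0 < n \<Longrightarrow> walk E (take n xs)"
proof (induction xs arbitrary: n)
  case Nil then show ?case by simp
next
  case (Cons x xs)
  then obtain m where n: "n = Suc m" by (cases n) auto
  show ?case
  proof (cases "xs = [] \<or> m = 0")
    case True then show ?thesis using n by auto
  next
    case False
    then show ?thesis using Cons n by (auto simp: walk_Cons_iff)
  qed
qed

lemma walk_drop: "walk E xs \<Longrightarrow> n < length xs \<Longrightarrow> walk E (drop n xs)"
proof (induction xs arbitrary: n)
  case Nil then show ?case by simp
next
  case (Cons x xs)
  then show ?case by (cases n) (auto simp: walk_Cons_iff)
qed

lemma walk_nth: "walk E xs \<Longrightarrow> Suc i < length xs \<Longrightarrow> E (xs ! i) (xs ! Suc i)"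
proof (induction xs arbitrary: i)
  case Nil then show ?case by simp
next
  case (Cons x xs)
  then show ?case by (cases i; cases xs) (auto simp: walk_Cons_iff)
qed

lemma walk_in_closed_set:
  assumes "walk E xs" "hd xs \<in> A" "\<forall>z\<in>A. \<forall>w. E z w \<longrightarrow> w \<in> A \<or> w = m" "m \<notin> set xs"
  shows "set xs \<subseteq> A"
  using assms
proof (induction xs)
  case Nil then show ?case by simp
next
  case (Cons x xs)
  show ?case
  proof (cases "xs = []")
    case False
    then have "hd xs \<in> A" using Cons.prems hd_in_set by (fastforce simp: walk_Cons_iff)
    then show ?thesis using Cons False by (auto simp: walk_Cons_iff)
  qed (use Cons.prems in simp)
qed

lemma leaf_not_major: "leaf V E l \<Longrightarrow> \<not> major V E l"
  unfolding leaf_def major_def by auto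

lemma ex_divergence_step: "f 0 = g 0 \<Longrightarrow> f k \<noteq> g k \<Longrightarrow> \<exists>j<k. f j = g j \<and> f (Suc j) \<noteq> g (Suc j)"
  by (induction k) (auto simp: less_Suc_eq)

lemma finite_has_max_nat:
  assumes "finite S" "x0 \<in> S" obtains x where "x \<in> S" "\<forall>y\<in>S. (f y :: nat) \<le> f x"
  using assms Max_in[of "f ` S"] Max_ge[of "f ` S"] by (metis empty_iff finite_imageI image_iff)

lemma finite_has_min_nat:
  assumes "finite S" "x0 \<in> S" obtains x where "x \<in> S" "\<forall>y\<in>S. f x \<le> (f y :: nat)"
  using assms Min_in[of "f ` S"] Min_le[of "f ` S"] by (metis empty_iff finite_imageI image_iff)

lemma half_card_le_sum_if_pairs_ge_1:
  fixes s :: "'b \<Rightarrow> real"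
  assumes "finite T" "2 \<le> card T" "\<forall>l\<in>T. 0 \<le> s l"
    and pairs: "\<forall>l\<in>T. \<forall>l'\<in>T. l \<noteq> l' \<longrightarrow> 1 \<le> s l + s l'"
  shows "real (card T) / 2 \<le> sum s T"
proof (cases "\<forall>l\<in>T. 1/2 \<le> s l")
  case True
  then have "sum (\<lambda>_. 1/2) T \<le> sum s T" by (intro sum_mono) auto
  then show ?thesis by simp
next
  case False
  then obtain l0 where l0: "l0 \<in> T" "s l0 < 1/2" by auto
  \<comment> \<open>then every other value is at least 1 - s l0 > 1/2\<close>
  have "sum (\<lambda>_. 1 - s l0) (T - {l0}) \<le> sum s (T - {l0})"
    using pairs l0(1) by (intro sum_mono) (smt (verit) DiffE insertI1)
  then have "(real (card T) - 1) * (1 - s l0) \<le> sum s (T - {l0})"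
    using assms(1,2) l0 by (simp add: card_Diff_singleton)
  moreover have "sum s T = s l0 + sum s (T - {l0})" using assms(1) l0 by (simp add: sum.remove)
  moreover have "0 \<le> (real (card T) - 2) * (1/2 - s l0)"
    using assms(2) l0 by (intro mult_nonneg_nonneg) auto
  ultimately show ?thesis by (simp add: algebra_simps)
qed

lemma sum_squeeze:
  fixes a b :: "'i \<Rightarrow> real"
  assumes "finite I" "\<forall>i\<in>I. b i \<le> a i" "sum a I \<le> s" "s \<le> sum b I"
  shows "(\<forall>i\<in>I. a i = b i) \<and> sum a I = s"
proof -
  have "sum b I \<le> sum a I" using assms(2) by (simp add: sum_mono)
  then have "sum (\<lambda>i. a i - b i) I = 0" using assms(3,4) by (simp add: sum_subtractf)
  then have "\<forall>i\<in>I. a i - b i = 0" using assms(1,2) by (subst (asm) sum_nonneg_eq_0_iff) auto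
  then show ?thesis using \<open>sum b I \<le> sum a I\<close> assms(3,4) by simp
qed

lemma fdim_le_sum: "resolving_function V E h \<Longrightarrow> fdim V E \<le> sum h V"
  unfolding fdim_def
proof (rule cInf_lower)
  show "bdd_below {sum g V |g. resolving_function V E g}"
    by (rule bdd_belowI[of _ 0]) (auto simp: resolving_function_def intro: sum_nonneg)
qed auto

section \<open>Distances and geodesics in a tree\<close>

locale tree_graph =
  fixes V :: "'a set" and E :: "'a \<Rightarrow> 'a \<Rightarrow> bool"
  assumes tree: "tree V E"
begin

lemma finite_V: "finite V" and edge_in_V: "E x y \<Longrightarrow> x \<in> V \<and> y \<in> V"
  and edge_sym: "E x y \<Longrightarrow> E y x" and edge_neq: "E x y \<Longrightarrow> x \<noteq> y"
  using tree unfolding tree_def graph_def by auto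

lemma connected: "x \<in> V \<Longrightarrow> y \<in> V \<Longrightarrow> \<exists>xs. walk E xs \<and> hd xs = x \<and> last xs = y"
  using tree unfolding tree_def connected_graph_def path_def by blast

lemma walk_subset_V: "walk E xs \<Longrightarrow> hd xs \<in> V \<Longrightarrow> set xs \<subseteq> V"
proof (induction xs)
  case Nil then show ?case by simp
next
  case (Cons x xs)
  then show ?case using edge_in_V by (cases "xs = []") (auto simp: walk_Cons_iff)
qed

abbreviation d :: "'a \<Rightarrow> 'a \<Rightarrow> nat" where "d \<equiv> dist E"

definition geodesic :: "'a list \<Rightarrow> 'a \<Rightarrow> 'a \<Rightarrow> bool" where
  "geodesic xs x y \<longleftrightarrow> walk E xs \<and> hd xs = x \<and> last xs = y \<and> length xs = Suc (d x y)"

lemma geodesic_exists: assumes "x \<in> V" "y \<in> V" obtains xs where "geodesic xs x y"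
proof -
  obtain xs where xs: "walk E xs" "hd xs = x" "last xs = y" using connected assms by blast
  then have "length xs = Suc (length xs - 1)" by (cases xs) auto
  then have "\<exists>n xs. walk E xs \<and> hd xs = x \<and> last xs = y \<and> length xs = Suc n" using xs by blast
  then have "\<exists>xs. walk E xs \<and> hd xs = x \<and> last xs = y \<and> length xs = Suc (d x y)"
    unfolding dist_def by (rule LeastI_ex)
  then show ?thesis using that unfolding geodesic_def by blast
qed

lemma dist_le_walk: "walk E xs \<Longrightarrow> hd xs = x \<Longrightarrow> last xs = y \<Longrightarrow> d x y \<le> length xs - 1"
proof -
  assume a: "walk E xs" "hd xs = x" "last xs = y"
  then have "length xs = Suc (length xs - 1)" by (cases xs) auto
  then show ?thesis unfolding dist_def using a by (intro Least_le) blast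
qed

lemma dist_self: "d x x = 0"
  using dist_le_walk[of "[x]" x x] by simp

lemma dist_eq_0_iff: "x \<in> V \<Longrightarrow> y \<in> V \<Longrightarrow> d x y = 0 \<longleftrightarrow> x = y"
proof
  assume xy: "x \<in> V" "y \<in> V" and "d x y = 0"
  obtain xs where "geodesic xs x y" using geodesic_exists[OF xy] by blast
  then show "x = y" using \<open>d x y = 0\<close> unfolding geodesic_def by (cases xs) auto
qed (simp add: dist_self)

lemma dist_commute: "x \<in> V \<Longrightarrow> y \<in> V \<Longrightarrow> d x y = d y x"
proof -
  have "d b a \<le> d a b" if ab: "a \<in> V" "b \<in> V" for a b
  proof -
    obtain xs where xs: "geodesic xs a b" using geodesic_exists[OF ab] by blast
    then have "walk E (rev xs)" "hd (rev xs) = b" "last (rev xs) = a"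
      using walk_rev[OF edge_sym] unfolding geodesic_def by (auto simp: hd_rev last_rev)
    then have "d b a \<le> length (rev xs) - 1" by (rule dist_le_walk)
    then show ?thesis using xs unfolding geodesic_def by simp
  qed
  then show "x \<in> V \<Longrightarrow> y \<in> V \<Longrightarrow> d x y = d y x" by (meson le_antisym)
qed

lemma dist_triangle: "x \<in> V \<Longrightarrow> y \<in> V \<Longrightarrow> z \<in> V \<Longrightarrow> d x z \<le> d x y + d y z"
proof -
  assume V: "x \<in> V" "y \<in> V" "z \<in> V"
  obtain xs where xs: "geodesic xs x y" using geodesic_exists V by blast
  obtain ys where ys: "geodesic ys y z" using geodesic_exists V by blast
  then obtain ys' where ys': "ys = y # ys'" unfolding geodesic_def by (cases ys) auto
  have "xs \<noteq> []" using xs unfolding geodesic_def by auto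
  show ?thesis
  proof (cases "ys' = []")
    case True then show ?thesis using ys ys' unfolding geodesic_def by simp
  next
    case False
    then have "walk E (xs @ ys')" "hd (xs @ ys') = x" "last (xs @ ys') = z"
      using xs ys ys' \<open>xs \<noteq> []\<close> unfolding geodesic_def by (auto simp: walk_append walk_Cons_iff)
    then have "d x z \<le> length (xs @ ys') - 1" by (rule dist_le_walk)
    then show ?thesis using xs ys ys' unfolding geodesic_def by simp
  qed
qed

lemma dist_edge: "E x y \<Longrightarrow> d x y = 1"
proof -
  assume e: "E x y"
  have "d x y \<le> 1" using dist_le_walk[of "[x, y]" x y] e by simp
  moreover have "d x y \<noteq> 0" using dist_eq_0_iff edge_in_V[OF e] edge_neq[OF e] by blast
  ultimately show ?thesis by simp
qed

lemma geodesic_ends: "geodesic xs x y \<Longrightarrow> xs ! 0 = x \<and> xs ! d x y = y"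
  unfolding geodesic_def by (metis diff_Suc_1 hd_conv_nth last_conv_nth list.size(3) nat.distinct(1))

lemma geodesic_subset_V: "geodesic xs x y \<Longrightarrow> x \<in> V \<Longrightarrow> set xs \<subseteq> V"
  unfolding geodesic_def using walk_subset_V by blast

lemma geodesic_nth_dist:
  assumes g: "geodesic xs x y" and x: "x \<in> V" and i: "i < length xs"
  shows "d x (xs ! i) = i \<and> d (xs ! i) y = d x y - i"
proof -
  have w: "walk E xs" "hd xs = x" "last xs = y" "length xs = Suc (d x y)"
    using g unfolding geodesic_def by auto
  have "xs \<noteq> []" using w(1) by auto
  then have V: "y \<in> V" "xs ! i \<in> V" using geodesic_subset_V[OF g x] w i by auto
  have "walk E (take (Suc i) xs)" using walk_take w by blast
  moreover have "hd (take (Suc i) xs) = x" using w i by (cases xs) auto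
  moreover have "last (take (Suc i) xs) = xs ! i" using i by (simp add: take_Suc_conv_app_nth)
  ultimately have "d x (xs ! i) \<le> i" using dist_le_walk[of "take (Suc i) xs"] i by fastforce
  moreover have "d (xs ! i) y \<le> length xs - i - 1"
    using dist_le_walk[OF walk_drop[OF w(1) i]] w i by (simp add: hd_drop_conv_nth)
  moreover have "d x y \<le> d x (xs ! i) + d (xs ! i) y" using dist_triangle x V by blast
  ultimately show ?thesis using w(4) i by linarith
qed

lemma geodesic_distinct: "geodesic xs x y \<Longrightarrow> x \<in> V \<Longrightarrow> distinct xs"
  unfolding distinct_conv_nth using geodesic_nth_dist by metis

lemma geodesic_index:
  "geodesic xs x y \<Longrightarrow> x \<in> V \<Longrightarrow> z \<in> set xs \<Longrightarrow> d x z < length xs \<and> xs ! d x z = z"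
  by (metis geodesic_nth_dist in_set_conv_nth)

lemma geodesic_dist_add: "geodesic xs x y \<Longrightarrow> x \<in> V \<Longrightarrow> z \<in> set xs \<Longrightarrow> d x z + d z y = d x y"
  using geodesic_index geodesic_nth_dist unfolding geodesic_def
  by (metis le_add_diff_inverse less_Suc_eq_le)

lemma geodesic_interior_neighbours:
  assumes g: "geodesic P v l" and v: "v \<in> V" and "0 < i" "i < d v l"
  shows "E (P ! i) (P ! (i - 1)) \<and> E (P ! i) (P ! (i + 1)) \<and> P ! (i - 1) \<noteq> P ! (i + 1)"
proof -
  have w: "walk E P" "length P = Suc (d v l)" using g unfolding geodesic_def by auto
  have "E (P ! (i - 1)) (P ! i)" using walk_nth[OF w(1), of "i - 1"] assms w(2) by simp
  moreover have "E (P ! i) (P ! (i + 1))" using walk_nth[OF w(1), of i] assms w(2) by simp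
  moreover have "d v (P ! (i - 1)) \<noteq> d v (P ! (i + 1))"
    using geodesic_nth_dist[OF g v, of "i - 1"] geodesic_nth_dist[OF g v, of "i + 1"] assms w(2)
    by simp
  ultimately show ?thesis using edge_sym by auto
qed

lemma no_paths_from_edge_to_common_end:
  assumes xs: "walk E xs" "distinct xs" and ys: "walk E ys" "distinct ys"
    and "last xs = last ys" and hd_xs: "hd xs \<notin> set ys" and hd_ys: "hd ys \<notin> set xs"
    and e: "E (hd xs) (hd ys)"
  shows False
proof -
  have nx: "xs \<noteq> []" and ny: "ys \<noteq> []" using xs ys by auto
  have "\<exists>i. i < length xs \<and> xs ! i \<in> set ys"
    using assms(5) nx ny by (metis diff_less last_conv_nth last_in_set length_greater_0_conv zero_less_one)
  \<comment> \<open>xs up to its first vertex on ys, followed by the reversed initial part of ys, is a cycle\<close>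
  then obtain i where i: "i < length xs" "xs ! i \<in> set ys"
    and before_i: "\<And>k. k < i \<Longrightarrow> xs ! k \<notin> set ys"
    unfolding exists_least_iff[of "\<lambda>i. i < length xs \<and> xs ! i \<in> set ys"] by (meson less_trans)
  have i0: "i \<noteq> 0" using i hd_xs nx by (metis hd_conv_nth)
  obtain j where j: "j < length ys" "ys ! j = xs ! i" using i(2) by (metis in_set_conv_nth)
  have j0: "j \<noteq> 0" using j hd_ys ny i(1) by (metis hd_conv_nth nth_mem)
  define c where "c = take (Suc i) xs @ rev (take j ys)"
  have "walk E (take (Suc i) xs)" using walk_take xs by blast
  moreover have "walk E (rev (take j ys))" using walk_rev[OF edge_sym walk_take[OF ys(1)]] j0 by blast
  moreover have "last (take (Suc i) xs) = xs ! i" using i by (simp add: take_Suc_conv_app_nth)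
  moreover have "hd (rev (take j ys)) = ys ! (j - 1)"
    using j j0 take_Suc_conv_app_nth[of "j - 1" ys] by (simp add: hd_rev)
  moreover have "E (xs ! i) (ys ! (j - 1))"
    using walk_nth[OF ys(1), of "j - 1"] j j0 edge_sym by simp
  ultimately have "walk E c" unfolding c_def using nx ny j0 by (simp add: walk_append)
  have "set (take i xs) \<inter> set ys = {}" using before_i by (force simp: in_set_conv_nth)
  moreover have "xs ! i \<notin> set (take j ys)"
    using set_take_disj_set_drop_if_distinct[OF ys(2) order.refl] Cons_nth_drop_Suc[OF j(1)] j(2)
    by (metis disjoint_iff list.set_intros(1))
  ultimately have "set (take (Suc i) xs) \<inter> set (take j ys) = {}"
    using i(1) set_take_subset[of j ys] by (auto simp: take_Suc_conv_app_nth)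
  then have "distinct c" unfolding c_def using xs(2) ys(2) by simp
  moreover have "3 \<le> length c" unfolding c_def using i j j0 i0 by simp
  moreover have "E (last c) (hd c)"
    unfolding c_def using e edge_sym nx ny j0 by (simp add: last_rev)
  ultimately have "has_cycle E" unfolding has_cycle_def using \<open>walk E c\<close> by blast
  then show False using tree unfolding tree_def by simp
qed

lemma edge_dist_neq: assumes e: "E u w" and z: "z \<in> V" shows "d u z \<noteq> d w z"
proof
  assume eq: "d u z = d w z"
  have u: "u \<in> V" and w: "w \<in> V" using edge_in_V e by auto
  obtain xs where xs: "geodesic xs u z" using geodesic_exists u z by blast
  obtain ys where ys: "geodesic ys w z" using geodesic_exists w z by blast
  have "d u w = 1" "d w u = 1" using dist_edge e edge_sym by auto
  have "u \<notin> set ys"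
  proof
    assume "u \<in> set ys"
    then have "d w u + d u z = d w z" using geodesic_dist_add[OF ys w] by blast
    then show False using eq \<open>d w u = 1\<close> by simp
  qed
  moreover have "w \<notin> set xs"
  proof
    assume "w \<in> set xs"
    then have "d u w + d w z = d u z" using geodesic_dist_add[OF xs u] by blast
    then show False using eq \<open>d u w = 1\<close> by simp
  qed
  ultimately show False
    using no_paths_from_edge_to_common_end[of xs ys] geodesic_distinct xs ys u w e
    unfolding geodesic_def by auto
qed

lemma closer_neighbour_unique:
  assumes ea: "E v a" and eb: "E v b" and z: "z \<in> V"
    and closer: "d a z < d v z" "d b z < d v z"
  shows "a = b"
proof (rule ccontr)
  assume "a \<noteq> b"
  have v: "v \<in> V" and a: "a \<in> V" and b: "b \<in> V" using edge_in_V ea eb by auto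
  have "d v z \<le> d v a + d a z" "d v z \<le> d v b + d b z" using dist_triangle v a b z by auto
  then have da: "d a z = d v z - 1" and db: "d b z = d v z - 1"
    using closer dist_edge ea eb by auto
  obtain xs where xs: "geodesic xs a z" using geodesic_exists a z by blast
  obtain ys where ys: "geodesic ys b z" using geodesic_exists b z by blast
  have not_on_geodesic: "v \<notin> set ps" if "geodesic ps c z" "c \<in> V" "d c z < d v z" for ps c
  proof
    assume "v \<in> set ps"
    then have "d c v + d v z = d c z" using geodesic_dist_add that(1,2) by blast
    then show False using that(3) by simp
  qed
  have "b \<notin> set xs"
  proof
    assume "b \<in> set xs"
    then have "d a b + d b z = d a z" using geodesic_dist_add[OF xs a] by blast
    then have "d a b = 0" using da db by linarith
    then show False using dist_eq_0_iff a b \<open>a \<noteq> b\<close> by blast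
  qed
  then have "hd (v # xs) \<notin> set ys" "hd ys \<notin> set (v # xs)"
    using not_on_geodesic[OF ys b closer(2)] edge_neq[OF eb] ys unfolding geodesic_def by auto
  moreover have "walk E (v # xs)" "distinct (v # xs)"
    using xs ea not_on_geodesic[OF xs a closer(1)] geodesic_distinct[OF xs a]
    unfolding geodesic_def by (auto simp: walk_Cons_iff)
  moreover have "last (v # xs) = last ys" using xs ys unfolding geodesic_def by auto
  ultimately show False
    using no_paths_from_edge_to_common_end[of "v # xs" ys] geodesic_distinct[OF ys b] ys eb
    unfolding geodesic_def by auto
qed

lemma edge_dist_cases:
  assumes e: "E u b" and z: "z \<in> V" shows "d u z = d b z + 1 \<or> d b z = d u z + 1"
proof -
  have u: "u \<in> V" and b: "b \<in> V" using edge_in_V e by auto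
  have "d u z \<le> d u b + d b z" "d b z \<le> d b u + d u z" using dist_triangle u b z by auto
  moreover have "d u b = 1" "d b u = 1" using dist_edge e edge_sym by auto
  moreover have "d u z \<noteq> d b z" using edge_dist_neq e z by blast
  ultimately show ?thesis by linarith
qed

section \<open>Branches at a vertex\<close>

text \<open>For a neighbour b of u, this is the vertex set of the component of T - u containing b.\<close>
definition branch :: "'a \<Rightarrow> 'a \<Rightarrow> 'a set" where
  "branch u b = {z \<in> V. d b z < d u z}"

lemma branch_dist: "E u b \<Longrightarrow> z \<in> branch u b \<Longrightarrow> d u z = d b z + 1"
  using edge_dist_cases unfolding branch_def by fastforce

lemma dist_outside_branch: "E u b \<Longrightarrow> z \<in> V \<Longrightarrow> z \<notin> branch u b \<Longrightarrow> d b z = d u z + 1"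
  using edge_dist_cases unfolding branch_def by fastforce

lemma branch_subset_V: "branch u b \<subseteq> V"
  unfolding branch_def by auto

lemma finite_branch: "finite (branch u b)"
  using finite_V branch_subset_V finite_subset by blast

lemma root_not_in_branch: "u \<notin> branch u b"
  unfolding branch_def using dist_self by auto

lemma in_own_branch: "E u b \<Longrightarrow> b \<in> branch u b"
  unfolding branch_def using dist_self dist_edge edge_in_V by auto

lemma branch_exists:
  assumes u: "u \<in> V" and z: "z \<in> V" and "z \<noteq> u"
  obtains b where "E u b" "z \<in> branch u b"
proof -
  obtain xs where xs: "geodesic xs u z" using geodesic_exists u z by blast
  have "d u z \<noteq> 0" using dist_eq_0_iff u z \<open>z \<noteq> u\<close> by auto
  then have l: "2 \<le> length xs" using xs unfolding geodesic_def by simp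
  have "E (xs ! 0) (xs ! 1)" using walk_nth[of E xs 0] xs l unfolding geodesic_def by simp
  moreover have "xs ! 0 = u" using geodesic_ends[OF xs] by blast
  moreover have "d (xs ! 1) z < d u z"
    using geodesic_nth_dist[OF xs u, of 1] l \<open>d u z \<noteq> 0\<close> by simp
  ultimately show ?thesis using that z unfolding branch_def by auto
qed

lemma branch_unique: "E u b \<Longrightarrow> E u c \<Longrightarrow> z \<in> branch u b \<Longrightarrow> z \<in> branch u c \<Longrightarrow> b = c"
  unfolding branch_def using closer_neighbour_unique by blast

lemma branch_closed:
  assumes e: "E u b" and z: "z \<in> branch u b" and zw: "E z w" and "w \<noteq> u"
  shows "w \<in> branch u b"
proof (rule ccontr)
  assume w_out: "w \<notin> branch u b"
  have uV: "u \<in> V" and bV: "b \<in> V" and zV: "z \<in> V" and wV: "w \<in> V"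
    using edge_in_V e zw by auto
  have dz: "d u z = d b z + 1" using branch_dist e z by blast
  have dw: "d b w = d u w + 1" using dist_outside_branch e wV w_out by blast
  have "d z u = d w u + 1 \<or> d w u = d z u + 1" "d z b = d w b + 1 \<or> d w b = d z b + 1"
    using edge_dist_cases[OF zw] uV bV by auto
  moreover have "d z u = d u z" "d w u = d u w" "d z b = d b z" "d w b = d b w"
    using dist_commute uV bV zV wV by auto
  ultimately have duw: "d u w + 1 = d u z" and dbw: "d b w = d b z + 1"
    using dz dw by linarith+
  have "z \<noteq> b"
  proof
    assume "z = b"
    then have "d u w = 0" using duw dist_edge[OF e] by simp
    then show False using dist_eq_0_iff uV wV \<open>w \<noteq> u\<close> by auto
  qed
  then obtain s where s: "E z s" "b \<in> branch z s" using branch_exists zV bV by metis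
  have sV: "s \<in> V" using edge_in_V s by auto
  have sb: "d s b < d z b" using s unfolding branch_def by auto
  have "d u s \<le> d u b + d b s" using dist_triangle uV bV sV by blast
  moreover have "d b s = d s b" "d u s = d s u" "d z u = d u z" "d w u = d u w" "d z b = d b z"
    "d w b = d b w" using dist_commute sV bV uV zV wV by auto
  ultimately have "d s u < d z u" "d w u < d z u" using sb dz duw dist_edge[OF e] by linarith+
  then have "s = w" using closer_neighbour_unique[OF s(1) zw uV] by blast
  then show False using sb dbw \<open>d z b = d b z\<close> \<open>d w b = d b w\<close> by simp
qed

lemma dist_via_root:
  assumes e: "E u b" and z: "z \<in> branch u b" and w: "w \<in> V" "w \<notin> branch u b"
  shows "d z w = d z u + d u w"
proof -
  have zV: "z \<in> V" using z branch_subset_V by auto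
  obtain xs where xs: "geodesic xs z w" using geodesic_exists zV w by blast
  have wk: "walk E xs" "hd xs = z" "last xs = w" "xs \<noteq> []" using xs unfolding geodesic_def by auto
  have "u \<in> set xs"
  proof (rule ccontr)
    assume "u \<notin> set xs"
    then have "set xs \<subseteq> branch u b"
      using walk_in_closed_set[OF wk(1)] branch_closed[OF e] wk z by blast
    then show False using wk w last_in_set[OF wk(4)] by auto
  qed
  then have "d z u < length xs" "xs ! d z u = u" using geodesic_index xs zV by auto
  then show ?thesis using geodesic_nth_dist[OF xs zV, of "d z u"] wk xs
    unfolding geodesic_def by auto
qed

lemma dist_within_branch:
  assumes e: "E u b" and y: "y \<in> branch u b" and z: "z \<in> branch u b"
  shows "d y z + 2 \<le> d y u + d u z"
proof -
  have yV: "y \<in> V" and zV: "z \<in> V" and uV: "u \<in> V" and bV: "b \<in> V"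
    using y z branch_subset_V edge_in_V e by auto
  have "d y z \<le> d y b + d b z" using dist_triangle yV bV zV by blast
  moreover have "d u y = d b y + 1" "d u z = d b z + 1" using branch_dist e y z by auto
  ultimately show ?thesis using dist_commute yV bV uV by auto
qed

lemma path_is_geodesic:
  "walk E xs \<Longrightarrow> distinct xs \<Longrightarrow> hd xs \<in> V \<Longrightarrow> geodesic xs (hd xs) (last xs)"
proof (induction xs)
  case Nil then show ?case by simp
next
  case (Cons a ys)
  show ?case
  proof (cases "ys = []")
    case True then show ?thesis using dist_self unfolding geodesic_def by simp
  next
    case False
    let ?b = "last ys" and ?a = "hd ys"
    have e: "E a ?a" and wy: "walk E ys" using Cons.prems False by (auto simp: walk_Cons_iff)
    have aV: "?a \<in> V" and bV: "?b \<in> V" using edge_in_V e walk_subset_V[OF wy] False by auto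
    have gy: "geodesic ys ?a ?b" using Cons aV wy by simp
    then have l: "length ys = Suc (d ?a ?b)" unfolding geodesic_def by simp
    have "d ?a ?b \<noteq> d a ?b + 1"
    proof
      assume h: "d ?a ?b = d a ?b + 1"
      then have "2 \<le> length ys" using l by simp
      then have "E ?a (ys ! 1)" "d (ys ! 1) ?b < d ?a ?b"
        using walk_nth[OF wy, of 0] geodesic_nth_dist[OF gy aV, of 1] h False
        by (auto simp: hd_conv_nth)
      then have "a = ys ! 1" using closer_neighbour_unique[OF edge_sym[OF e] _ bV] h by auto
      then show False using Cons.prems \<open>2 \<le> length ys\<close> by auto
    qed
    then have "d a ?b = d ?a ?b + 1" using edge_dist_cases[OF e bV] by blast
    then show ?thesis using Cons.prems l False unfolding geodesic_def by simp
  qed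
qed

section \<open>Leaves, terminal vertices and exterior major vertices\<close>

lemma finite_neighbours: "finite {w \<in> V. E z w}"
  using finite_V by simp

lemma major_if_three_neighbours:
  assumes "z \<in> V" "E z a" "E z b" "E z c" "a \<noteq> b" "a \<noteq> c" "b \<noteq> c"
  shows "major V E z"
proof -
  have "{a, b, c} \<subseteq> {w \<in> V. E z w}" using assms edge_in_V by auto
  then have "card {a, b, c} \<le> card {w \<in> V. E z w}" using finite_neighbours by (rule card_mono[rotated])
  then show ?thesis using assms unfolding major_def degree_def by auto
qed

lemma leaf_neighbour_unique: "leaf V E z \<Longrightarrow> E z a \<Longrightarrow> E z w \<Longrightarrow> w = a"
  unfolding leaf_def degree_def using edge_in_V
  by (metis (mono_tags, lifting) card_1_singletonE mem_Collect_eq singletonD)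

lemma major_in_V: "major V E v \<Longrightarrow> v \<in> V"
  unfolding major_def by blast

lemma M2_major: "v \<in> M2 V E \<Longrightarrow> major V E v"
  unfolding M2_def ext_major_def by blast

lemma terminals_subset_V: "terminals V E v \<subseteq> V"
  unfolding terminals_def leaf_def by auto

lemma finite_terminals: "finite (terminals V E v)"
  using terminals_subset_V finite_V finite_subset by blast

lemma terminal_neq_major: "major V E v \<Longrightarrow> l \<in> terminals V E v \<Longrightarrow> l \<noteq> v"
  by (auto simp: terminals_def dest: leaf_not_major)

lemma terminals_disjoint:
  assumes "major V E v" "major V E w" "v \<noteq> w"
  shows "terminals V E v \<inter> terminals V E w = {}"
  using assms unfolding terminals_def by fastforce

lemma branch_contains_leaf: assumes e: "E u b" obtains l where "l \<in> branch u b" "leaf V E l"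
proof -
  have uV: "u \<in> V" using edge_in_V e by auto
  \<comment> \<open>a vertex of the branch farthest from u is a leaf\<close>
  obtain l where l: "l \<in> branch u b" "\<forall>z\<in>branch u b. d u z \<le> d u l"
    using finite_has_max_nat[OF finite_branch in_own_branch[OF e]] by blast
  have lV: "l \<in> V" using l branch_subset_V by auto
  have "l \<noteq> u" using l root_not_in_branch by metis
  then obtain n where n: "E l n" "u \<in> branch l n" using branch_exists lV uV by metis
  have "w = n" if w: "E l w" for w
  proof -
    have wV: "w \<in> V" using edge_in_V w by auto
    have "d u w \<le> d u l"
      using l branch_closed[OF e l(1) w] dist_self by (cases "w = u") auto
    moreover have "d l u = d w u + 1 \<or> d w u = d l u + 1" using edge_dist_cases[OF w uV] .
    moreover have "d l u = d u l" "d w u = d u w" using dist_commute lV uV wV by auto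
    ultimately have "d w u < d l u" by linarith
    moreover have "d n u < d l u" using n unfolding branch_def by auto
    ultimately show "w = n" using closer_neighbour_unique[OF w n(1) uV] by blast
  qed
  then have "{w \<in> V. E l w} = {n}" using n edge_in_V by blast
  then show ?thesis using that l lV unfolding leaf_def degree_def by auto
qed

lemma geodesic_to_terminal_no_major:
  assumes g: "geodesic P v l" and vV: "v \<in> V" and lt: "l \<in> terminals V E v"
    and z: "z \<in> set P" "z \<noteq> v"
  shows "\<not> major V E z"
proof
  assume mz: "major V E z"
  have lV: "l \<in> V" and zV: "z \<in> V"
    using lt terminals_subset_V geodesic_subset_V[OF g vV] z by auto
  have "d v z + d z l = d v l" using geodesic_dist_add[OF g vV z(1)] .
  moreover have "d v z \<noteq> 0" using dist_eq_0_iff vV zV z(2) by auto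
  moreover have "d l v < d l z" using lt mz z(2) unfolding terminals_def by blast
  moreover have "d z l = d l z" "d v l = d l v" using dist_commute zV lV vV by auto
  ultimately show False by linarith
qed

lemma geodesic_to_terminal_closed:
  assumes g: "geodesic P m l" and mV: "m \<in> V" and lt: "l \<in> terminals V E m"
    and z: "z \<in> set P" "z \<noteq> m" and zw: "E z w"
  shows "w \<in> set P"
proof -
  have wP: "walk E P" "length P = Suc (d m l)" using g unfolding geodesic_def by auto
  define i where "i = d m z"
  have i: "i < length P" "P ! i = z" using geodesic_index[OF g mV z(1)] unfolding i_def by auto
  have "i \<noteq> 0" using i z(2) geodesic_ends[OF g] by metis
  then have "E (P ! (i - 1)) z" using walk_nth[OF wP(1), of "i - 1"] i by simp
  then have prev: "E z (P ! (i - 1))" "P ! (i - 1) \<in> set P" using edge_sym i by auto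
  show ?thesis
  proof (cases "i < d m l")
    case True
    have "E z (P ! (i + 1))" "P ! (i - 1) \<noteq> P ! (i + 1)" "P ! (i + 1) \<in> set P"
      using geodesic_interior_neighbours[OF g mV _ True] \<open>i \<noteq> 0\<close> i wP(2) True by auto
    moreover have "\<not> major V E z" using geodesic_to_terminal_no_major[OF g mV lt z] .
    ultimately show ?thesis
      using major_if_three_neighbours[of z "P ! (i - 1)" "P ! (i + 1)" w] prev zw edge_in_V
      by blast
  next
    case False
    then have "z = l" using i wP(2) geodesic_ends[OF g] by (metis less_antisym)
    then have "leaf V E z" using lt unfolding terminals_def by blast
    then show ?thesis using leaf_neighbour_unique zw prev by blast
  qed
qed

lemma branch_subset_geodesic_to_terminal:
  assumes mV: "m \<in> V" and lt: "l \<in> terminals V E m" and e: "E m e"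
    and l_in: "l \<in> branch m e" and g: "geodesic P m l"
  shows "branch m e \<subseteq> set P"
proof
  fix t assume t: "t \<in> branch m e"
  have lV: "l \<in> V" and eV: "e \<in> V" and tV: "t \<in> V"
    using lt terminals_subset_V edge_in_V[OF e] t branch_subset_V by blast+
  have wP: "walk E P" "hd P = m" "length P = Suc (d m l)" using g unfolding geodesic_def by auto
  have "l \<noteq> m" using l_in root_not_in_branch by metis
  then have "d m l \<noteq> 0" using dist_eq_0_iff mV lV by auto
  then have "E m (P ! 1)" "d (P ! 1) l < d m l"
    using walk_nth[OF wP(1), of 0] geodesic_nth_dist[OF g mV, of 1] wP geodesic_ends[OF g] by auto
  moreover have "d e l < d m l" using l_in unfolding branch_def by auto
  ultimately have "e = P ! 1" using closer_neighbour_unique[OF e _ lV] by blast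
  then have e_in: "e \<in> set P - {m}" using wP \<open>d m l \<noteq> 0\<close> edge_neq[OF e] by auto
  obtain R where R: "geodesic R e t" using geodesic_exists eV tV by blast
  have wR: "walk E R" "hd R = e" "last R = t" "R \<noteq> []" using R unfolding geodesic_def by auto
  have "m \<notin> set R"
  proof
    assume "m \<in> set R"
    then have "d e m + d m t = d e t" using geodesic_dist_add[OF R eV] by blast
    then show False using t unfolding branch_def by auto
  qed
  moreover have "\<forall>z\<in>set P - {m}. \<forall>w. E z w \<longrightarrow> w \<in> set P - {m} \<or> w = m"
    using geodesic_to_terminal_closed[OF g mV lt] by blast
  ultimately have "set R \<subseteq> set P - {m}" using walk_in_closed_set[OF wR(1)] wR(2) e_in by blast
  then show "t \<in> set P" using wR(3,4) last_in_set by blast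
qed

lemma branch_without_major_has_terminal:
  assumes e: "E m c" and no_major: "\<forall>z\<in>branch m c. \<not> major V E z"
  obtains l where "l \<in> branch m c" "l \<in> terminals V E m"
proof -
  obtain l where l: "l \<in> branch m c" "leaf V E l" using branch_contains_leaf[OF e] by blast
  have mV: "m \<in> V" using edge_in_V e by auto
  have "d l m < d l w" if w: "major V E w" "w \<noteq> m" for w
  proof -
    have wV: "w \<in> V" using major_in_V w(1) .
    have "d l w = d l m + d m w" using dist_via_root[OF e l(1) wV] no_major w by blast
    moreover have "d m w \<noteq> 0" using dist_eq_0_iff mV wV w by auto
    ultimately show ?thesis by simp
  qed
  then show ?thesis using that l unfolding terminals_def by blast
qed

lemma M2_if_two_branches_without_major:
  assumes "major V E m" and e: "E m c1" "E m c2" "c1 \<noteq> c2"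
    and "\<forall>z\<in>branch m c1. \<not> major V E z" "\<forall>z\<in>branch m c2. \<not> major V E z"
  shows "m \<in> M2 V E"
proof -
  obtain l1 l2 where l: "l1 \<in> branch m c1" "l1 \<in> terminals V E m" "l2 \<in> branch m c2" "l2 \<in> terminals V E m"
    using branch_without_major_has_terminal e assms(5,6) by metis
  have "l1 \<noteq> l2" using l branch_unique e by blast
  then have "card {l1, l2} = 2" by simp
  moreover have "card {l1, l2} \<le> ter V E m"
    unfolding ter_def using l finite_terminals by (intro card_mono) auto
  ultimately show ?thesis unfolding M2_def ext_major_def using assms(1) by auto
qed

lemma major_has_two_branches_away:
  assumes m: "major V E m" and u: "u \<in> V"
  obtains c1 c2 where "E m c1" "E m c2" "c1 \<noteq> c2" "u \<notin> branch m c1" "u \<notin> branch m c2"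
proof -
  let ?A = "{w \<in> V. E m w \<and> u \<notin> branch m w}" and ?B = "{w \<in> V. E m w \<and> u \<in> branch m w}"
  have "finite ?A" "finite ?B" using finite_V by auto
  have "3 \<le> card {w \<in> V. E m w}" using m unfolding major_def degree_def by auto
  also have "{w \<in> V. E m w} = ?A \<union> ?B" by blast
  also have "card (?A \<union> ?B) = card ?A + card ?B"
    using \<open>finite ?A\<close> \<open>finite ?B\<close> by (intro card_Un_disjoint) auto
  finally have "3 \<le> card ?A + card ?B" .
  moreover have "card ?B \<le> Suc 0"
    unfolding card_le_Suc0_iff_eq[OF \<open>finite ?B\<close>] using branch_unique by blast
  ultimately have "2 \<le> card ?A" by linarith
  then obtain c1 c2 where "c1 \<in> ?A" "c2 \<in> ?A" "c1 \<noteq> c2"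
    using card_le_Suc0_iff_eq[of ?A] finite_neighbours by fastforce
  then show ?thesis using that by blast
qed

lemma branch_with_major_contains_M2:
  assumes e: "E u b" and "z0 \<in> branch u b" "major V E z0"
  obtains v where "v \<in> branch u b" "v \<in> M2 V E"
proof -
  let ?S = "{z \<in> branch u b. major V E z}"
  \<comment> \<open>the major vertex of the branch farthest from u has two branches free of major vertices\<close>
  obtain m where m: "m \<in> ?S" "\<forall>z\<in>?S. d u z \<le> d u m"
    using finite_has_max_nat[of ?S z0 "d u"] finite_branch assms(2,3) by auto
  have uV: "u \<in> V" using edge_in_V e by blast
  have mV: "m \<in> V" using m branch_subset_V by blast
  have "m \<noteq> u" using m root_not_in_branch by blast
  have no_major: "\<forall>z\<in>branch m c. \<not> major V E z" if c: "E m c" "u \<notin> branch m c" for c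
  proof (intro ballI notI)
    fix z assume z: "z \<in> branch m c" "major V E z"
    have zV: "z \<in> V" using z branch_subset_V by auto
    have dz: "d z u = d z m + d m u" using dist_via_root[OF c(1) z(1) uV c(2)] .
    have "z \<in> branch u b"
    proof (rule ccontr)
      assume "z \<notin> branch u b"
      then have "d m z = d m u + d u z" using dist_via_root[OF e _ zV] m by blast
      moreover have "d z m = d m z" "d z u = d u z" using dist_commute zV mV uV by auto
      ultimately have "d m u = 0" using dz by linarith
      then show False using dist_eq_0_iff mV uV \<open>m \<noteq> u\<close> by auto
    qed
    then have "d u z \<le> d u m" using m z by blast
    moreover have "z \<noteq> m" using z root_not_in_branch by metis
    then have "d z m \<noteq> 0" using dist_eq_0_iff zV mV by auto
    moreover have "d z u = d u z" "d m u = d u m" using dist_commute zV mV uV by auto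
    ultimately show False using dz by linarith
  qed
  obtain c1 c2 where "E m c1" "E m c2" "c1 \<noteq> c2" "u \<notin> branch m c1" "u \<notin> branch m c2"
    using major_has_two_branches_away m uV by blast
  then have "m \<in> M2 V E" using M2_if_two_branches_without_major m no_major by blast
  then show ?thesis using that m by blast
qed

lemma geodesics_from_leaf_fork_at_major:
  assumes l: "leaf V E l" and P: "geodesic P l p" and Q: "geodesic Q l q"
    and same: "d l p = d l q" and "p \<noteq> q"
  shows "\<exists>j. 0 < j \<and> j < d l p \<and> major V E (P ! j)"
proof -
  define k where "k = d l p"
  have lV: "l \<in> V" using l unfolding leaf_def by blast
  have wP: "walk E P" "length P = Suc k" "P ! 0 = l" "P ! k = p"
    using P geodesic_ends[OF P] unfolding geodesic_def k_def by auto
  have wQ: "walk E Q" "length Q = Suc k" "Q ! 0 = l" "Q ! k = q"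
    using Q geodesic_ends[OF Q] same unfolding geodesic_def k_def by auto
  obtain j where jk: "j < k" and j: "P ! j = Q ! j" and fork: "P ! (j + 1) \<noteq> Q ! (j + 1)"
    using ex_divergence_step[of "(!) P" "(!) Q" k] wP(3,4) wQ(3,4) \<open>p \<noteq> q\<close> by auto
  have e1: "E (P ! j) (P ! (j + 1))" using walk_nth[OF wP(1), of j] jk wP(2) by simp
  have e2: "E (P ! j) (Q ! (j + 1))" using walk_nth[OF wQ(1), of j] jk wQ(2) j by simp
  have "j \<noteq> 0"
  proof
    assume "j = 0"
    then show False using leaf_neighbour_unique[OF l] e1 e2 fork wP(3) by metis
  qed
  have "E (P ! j) (P ! (j - 1))" "P ! (j - 1) \<noteq> P ! (j + 1)"
    using geodesic_interior_neighbours[OF P lV] \<open>j \<noteq> 0\<close> jk unfolding k_def by auto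
  moreover have "P ! (j - 1) \<noteq> Q ! (j + 1)"
  proof
    assume eq: "P ! (j - 1) = Q ! (j + 1)"
    have "d l (P ! (j - 1)) = j - 1" using geodesic_nth_dist[OF P lV, of "j - 1"] wP(2) jk by simp
    moreover have "d l (Q ! (j + 1)) = j + 1" using geodesic_nth_dist[OF Q lV, of "j + 1"] wQ(2) jk by simp
    ultimately show False using eq by simp
  qed
  ultimately have "major V E (P ! j)"
    using major_if_three_neighbours e1 e2 fork edge_in_V by metis
  then show ?thesis using \<open>j \<noteq> 0\<close> jk unfolding k_def by blast
qed

lemma leaf_is_terminal_of_nearest_major:
  assumes l: "leaf V E l" and "major V E w0"
  obtains v where "major V E v" "l \<in> terminals V E v"
proof -
  have lV: "l \<in> V" using l unfolding leaf_def by blast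
  have "finite {w. major V E w}" using finite_V by (rule finite_subset[rotated]) (auto simp: major_def)
  then obtain v where v: "major V E v" "\<forall>w. major V E w \<longrightarrow> d l v \<le> d l w"
    using finite_has_min_nat[of "{w. major V E w}" w0 "d l"] assms(2) by auto
  have "d l v < d l w" if w: "major V E w" "w \<noteq> v" for w
  proof (rule ccontr)
    assume "\<not> d l v < d l w"
    then have same: "d l v = d l w" using v w by (simp add: le_antisym)
    have "v \<in> V" "w \<in> V" using major_in_V v(1) w(1) by auto
    then obtain P Q where "geodesic P l v" "geodesic Q l w" using geodesic_exists lV by metis
    then obtain j where "0 < j" "j < d l v" "major V E (P ! j)"
      using geodesics_from_leaf_fork_at_major l same w(2) by metis
    moreover have "d l (P ! j) = j"
      using geodesic_nth_dist[OF \<open>geodesic P l v\<close> lV, of j] \<open>j < d l v\<close>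
      \<open>geodesic P l v\<close> unfolding geodesic_def by simp
    ultimately show False using v(2) by fastforce
  qed
  then show ?thesis using that v(1) l unfolding terminals_def by blast
qed

section \<open>The lower bound\<close>

lemma between_in_branch:
  assumes e: "E u b" and l: "l \<in> branch u b" and z: "z \<in> V" "z \<noteq> u"
    and between: "d u z + d z l = d u l"
  shows "z \<in> branch u b"
proof (rule ccontr)
  assume "z \<notin> branch u b"
  then have "d l z = d l u + d u z" using dist_via_root[OF e l z(1)] by blast
  moreover have uV: "u \<in> V" and "l \<in> V" using edge_in_V[OF e] l branch_subset_V by blast+
  then have "d z l = d l z" "d u l = d l u" using dist_commute z(1) by auto
  ultimately have "d u z = 0" using between by linarith
  then show False using dist_eq_0_iff uV z by auto
qed

lemma Tv_subset_V: "v \<in> V \<Longrightarrow> Tv V E v \<subseteq> V"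
  unfolding Tv_def path_def using walk_subset_V by blast

lemma finite_Tv: "v \<in> V \<Longrightarrow> finite (Tv V E v)"
  using Tv_subset_V finite_V finite_subset by blast

lemma geodesic_to_terminal_subset_Tv:
  "geodesic P v l \<Longrightarrow> v \<in> V \<Longrightarrow> l \<in> terminals V E v \<Longrightarrow> set P \<subseteq> Tv V E v"
  unfolding Tv_def path_def using geodesic_distinct unfolding geodesic_def by blast

lemma branch_to_terminal_subset_Tv:
  assumes vV: "v \<in> V" and lt: "l \<in> terminals V E v" and e: "E v e" and l: "l \<in> branch v e"
  shows "branch v e \<subseteq> Tv V E v - {v}"
proof -
  have "l \<in> V" using lt terminals_subset_V by blast
  then obtain P where P: "geodesic P v l" using geodesic_exists vV by blast
  show ?thesis using branch_subset_geodesic_to_terminal[OF vV lt e l P]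
      geodesic_to_terminal_subset_Tv[OF P vV lt] root_not_in_branch by blast
qed

lemma Tv_in_branch_without_major:
  assumes vV: "v \<in> V" and z: "z \<in> Tv V E v" "z \<noteq> v"
  obtains e where "E v e" "z \<in> branch v e" "\<forall>z'\<in>branch v e. \<not> major V E z'"
proof -
  obtain l Q where lt: "l \<in> terminals V E v" and Q: "path E Q v l" and zQ: "z \<in> set Q"
    using z unfolding Tv_def by blast
  have g: "geodesic Q v l" using path_is_geodesic Q vV unfolding path_def by blast
  have lV: "l \<in> V" and zV: "z \<in> V" using lt terminals_subset_V geodesic_subset_V[OF g vV] zQ by auto
  have "l \<noteq> v"
  proof
    assume "l = v"
    then have "d v z = 0" using geodesic_dist_add[OF g vV zQ] dist_self by simp
    then show False using dist_eq_0_iff vV zV z(2) by auto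
  qed
  then obtain e where e: "E v e" "l \<in> branch v e" using branch_exists vV lV by metis
  have "z \<in> branch v e" using between_in_branch[OF e zV z(2)] geodesic_dist_add[OF g vV zQ] .
  moreover have "\<forall>z'\<in>branch v e. \<not> major V E z'"
    using branch_subset_geodesic_to_terminal[OF vV lt e g] root_not_in_branch
      geodesic_to_terminal_no_major[OF g vV lt] by blast
  ultimately show ?thesis using that e by blast
qed

lemma Tv_disjoint:
  assumes v: "major V E v" and w: "major V E w" and "v \<noteq> w"
  shows "(Tv V E v - {v}) \<inter> (Tv V E w - {w}) = {}"
proof (rule ccontr)
  assume "(Tv V E v - {v}) \<inter> (Tv V E w - {w}) \<noteq> {}"
  then obtain z where z: "z \<in> Tv V E v" "z \<noteq> v" "z \<in> Tv V E w" "z \<noteq> w" by blast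
  have vV: "v \<in> V" and wV: "w \<in> V" using v w major_in_V by auto
  obtain e where e: "E v e" "z \<in> branch v e" "\<forall>z'\<in>branch v e. \<not> major V E z'"
    using Tv_in_branch_without_major[OF vV z(1,2)] by blast
  obtain f where f: "E w f" "z \<in> branch w f" "\<forall>z'\<in>branch w f. \<not> major V E z'"
    using Tv_in_branch_without_major[OF wV z(3,4)] by blast
  have "d z w = d z v + d v w" using dist_via_root[OF e(1,2) wV] e(3) w by blast
  moreover have "d z v = d z w + d w v" using dist_via_root[OF f(1,2) vV] f(3) v by blast
  ultimately have "d v w = 0" by linarith
  then show False using dist_eq_0_iff vV wV \<open>v \<noteq> w\<close> by blast
qed

lemma terminal_unique_in_branch:
  assumes vV: "v \<in> V" and lt: "l \<in> terminals V E v" "l' \<in> terminals V E v"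
    and e: "E v e" and l: "l \<in> branch v e" "l' \<in> branch v e"
  shows "l = l'"
proof -
  have lV: "l \<in> V" "l' \<in> V" using lt terminals_subset_V by auto
  obtain P where P: "geodesic P v l" using geodesic_exists[OF vV lV(1)] by blast
  obtain P' where P': "geodesic P' v l'" using geodesic_exists[OF vV lV(2)] by blast
  have "l' \<in> set P" using branch_subset_geodesic_to_terminal[OF vV lt(1) e l(1) P] l(2) by blast
  have "l \<in> set P'" using branch_subset_geodesic_to_terminal[OF vV lt(2) e l(2) P'] l(1) by blast
  have "d v l' + d l' l = d v l" using geodesic_dist_add[OF P vV \<open>l' \<in> set P\<close>] .
  moreover have "d v l + d l l' = d v l'" using geodesic_dist_add[OF P' vV \<open>l \<in> set P'\<close>] .
  ultimately have "d v l' = d v l" by linarith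
  then show ?thesis using geodesic_index[OF P vV \<open>l' \<in> set P\<close>] geodesic_ends[OF P] by metis
qed

lemma Rset_neighbours_subset_branches:
  assumes "E v a" "E v b" shows "Rset V E a b \<subseteq> branch v a \<union> branch v b"
  using dist_outside_branch[OF assms(1)] dist_outside_branch[OF assms(2)]
  unfolding Rset_def by fastforce

lemma resolving_function_branch_pair:
  assumes g: "resolving_function V E g" and e: "E v a" "E v b" "a \<noteq> b"
  shows "1 \<le> sum g (branch v a) + sum g (branch v b)"
proof -
  have "a \<in> V" "b \<in> V" using edge_in_V e by auto
  then have "1 \<le> sum g (Rset V E a b)" using g e(3) unfolding resolving_function_def by blast
  also have "\<dots> \<le> sum g (branch v a \<union> branch v b)"
  proof (rule sum_mono2)
    show "\<And>z. z \<in> branch v a \<union> branch v b - Rset V E a b \<Longrightarrow> 0 \<le> g z"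
      using g branch_subset_V unfolding resolving_function_def by blast
  qed (use Rset_neighbours_subset_branches[OF e(1,2)] finite_branch in auto)
  also have "\<dots> = sum g (branch v a) + sum g (branch v b)"
    using branch_unique[OF e(1,2)] e(3) finite_branch by (intro sum.union_disjoint) auto
  finally show ?thesis .
qed

lemma half_ter_le_sum_Tv:
  assumes v: "v \<in> M2 V E" and g: "resolving_function V E g"
  shows "real (ter V E v) / 2 \<le> sum g (Tv V E v - {v})"
proof -
  have mj: "major V E v" using M2_major v .
  have vV: "v \<in> V" using major_in_V mj .
  let ?T = "terminals V E v"
  have g_nonneg: "\<forall>z\<in>V. 0 \<le> g z" using g unfolding resolving_function_def by blast
  have "\<forall>l\<in>?T. \<exists>e. E v e \<and> l \<in> branch v e"
    using branch_exists[OF vV] terminals_subset_V terminal_neq_major[OF mj] by (metis subsetD)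
  then obtain nb where nb: "\<forall>l\<in>?T. E v (nb l) \<and> l \<in> branch v (nb l)" by metis
  have nb_inj: "nb l \<noteq> nb l'" if "l \<in> ?T" "l' \<in> ?T" "l \<noteq> l'" for l l'
    using terminal_unique_in_branch[OF vV] nb that by metis
  have "real (card ?T) / 2 \<le> (\<Sum>l\<in>?T. sum g (branch v (nb l)))"
  proof (rule half_card_le_sum_if_pairs_ge_1[OF finite_terminals])
    show "2 \<le> card ?T" using v unfolding M2_def ter_def by blast
    show "\<forall>l\<in>?T. 0 \<le> sum g (branch v (nb l))"
      using g_nonneg branch_subset_V by (meson subsetD sum_nonneg)
    show "\<forall>l\<in>?T. \<forall>l'\<in>?T. l \<noteq> l' \<longrightarrow> 1 \<le> sum g (branch v (nb l)) + sum g (branch v (nb l'))"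
      using resolving_function_branch_pair[OF g] nb nb_inj by blast
  qed
  also have "\<dots> = sum g (\<Union>l\<in>?T. branch v (nb l))"
    using finite_terminals finite_branch branch_unique nb nb_inj
    by (intro sum.UNION_disjoint[symmetric]) blast+
  also have "\<dots> \<le> sum g (Tv V E v - {v})"
  proof (rule sum_mono2)
    show "finite (Tv V E v - {v})" using finite_Tv vV by blast
    show "(\<Union>l\<in>?T. branch v (nb l)) \<subseteq> Tv V E v - {v}"
      using branch_to_terminal_subset_Tv[OF vV] nb by blast
    show "\<And>z. z \<in> Tv V E v - {v} - (\<Union>l\<in>?T. branch v (nb l)) \<Longrightarrow> 0 \<le> g z"
      using g_nonneg Tv_subset_V vV by blast
  qed
  finally show ?thesis unfolding ter_def .
qed

section \<open>The upper bound\<close>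

lemma dist_to_terminal:
  assumes mj: "major V E v" and lt: "l \<in> terminals V E v" and z: "z \<in> V"
  shows "d z l + d v z = d v l \<and> 0 < d v z \<or> d z l = d v z + d v l"
proof -
  have vV: "v \<in> V" and lV: "l \<in> V" using major_in_V mj lt terminals_subset_V by auto
  obtain e where e: "E v e" "l \<in> branch v e"
    using branch_exists vV lV terminal_neq_major[OF mj lt] by metis
  show ?thesis
  proof (cases "z \<in> branch v e")
    case True
    obtain P where P: "geodesic P v l" using geodesic_exists vV lV by blast
    have "z \<in> set P" using branch_subset_geodesic_to_terminal[OF vV lt e(1,2) P] True by blast
    then have "d v z + d z l = d v l" using geodesic_dist_add[OF P vV] by blast
    moreover have "0 < d v z" using True root_not_in_branch dist_eq_0_iff vV z by fastforce
    ultimately show ?thesis by simp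
  next
    case False
    then have "d l z = d l v + d v z" using dist_via_root[OF e z] by blast
    then show ?thesis using dist_commute lV vV z by simp
  qed
qed

lemma terminal_resolves_if_major_resolves:
  assumes mj: "major V E v" and lt: "l \<in> terminals V E v" and x: "x \<in> V" and y: "y \<in> V"
    and "d x v \<noteq> d y v"
  shows "d x l \<noteq> d y l"
proof -
  have "d v x \<noteq> d v y" using assms(5) dist_commute major_in_V[OF mj] x y by simp
  then show ?thesis using dist_to_terminal[OF mj lt x] dist_to_terminal[OF mj lt y] by linarith
qed

lemma branch_contains_M2_unless_terminal:
  assumes e: "E m c" and no_terminal: "\<forall>l\<in>terminals V E m. l \<notin> branch m c"
  obtains v where "v \<in> branch m c" "v \<in> M2 V E"
  using branch_with_major_contains_M2[OF e] branch_without_major_has_terminal[OF e] no_terminal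
  by metis

lemma equidistant_from_other_branch:
  assumes e: "E u c" and v: "v \<in> branch u c" and x: "x \<in> V" "x \<notin> branch u c"
    and y: "y \<in> V" "y \<notin> branch u c" and "d x v = d y v"
  shows "d u x = d u y"
proof -
  have vV: "v \<in> V" using v branch_subset_V by blast
  have "d v x = d v u + d u x" "d v y = d v u + d u y"
    using dist_via_root[OF e v x] dist_via_root[OF e v y] by auto
  then show ?thesis using assms(7) dist_commute vV x(1) y(1) by simp
qed

lemma closer_within_branch:
  assumes e: "E u f" and y: "y \<in> branch u f" and v: "v \<in> branch u f"
    and x: "x \<in> V" "x \<notin> branch u f" and "d u x = d u y"
  shows "d y v < d x v"
proof -
  have yV: "y \<in> V" and vV: "v \<in> V" and uV: "u \<in> V"
    using y v branch_subset_V edge_in_V[OF e] by blast+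
  have "d v x = d v u + d u x" using dist_via_root[OF e v x] .
  moreover have "d y v + 2 \<le> d y u + d u v" using dist_within_branch[OF e y v] .
  moreover have "d x v = d v x" "d y u = d u y" "d u v = d v u"
    using dist_commute x(1) yV vV uV by auto
  ultimately show ?thesis using assms(6) by linarith
qed

lemma branch_behind_closer:
  assumes e: "E x a" and y: "y \<in> branch x a" and z: "z \<in> branch a x"
  shows "d z x < d z y"
proof -
  have xV: "x \<in> V" and aV: "a \<in> V" and yV: "y \<in> V" and zV: "z \<in> V"
    using edge_in_V[OF e] y z branch_subset_V by blast+
  have "y \<notin> branch a x" using y unfolding branch_def by auto
  then have "d z y = d z a + d a y" using dist_via_root[OF edge_sym[OF e] z yV] by blast
  moreover have "d x z < d a z" using z unfolding branch_def by blast
  moreover have "d x z = d z x" "d a z = d z a" using dist_commute xV zV aV by auto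
  ultimately show ?thesis by linarith
qed

lemma terminals_of_major_not_M2:
  assumes "major V E v" "v \<notin> M2 V E" "l \<in> terminals V E v" "l' \<in> terminals V E v"
  shows "l' = l"
proof -
  have "card (terminals V E v) \<le> Suc 0"
    using assms unfolding M2_def ext_major_def ter_def by auto
  then show ?thesis using card_le_Suc0_iff_eq[OF finite_terminals] assms(3,4) by blast
qed

lemma owner_in_M2:
  assumes x: "x \<in> V" and y: "y \<in> V" "y \<noteq> x" and equidistant: "\<forall>v\<in>M2 V E. d x v = d y v"
    and ow: "major V E ow" and lt: "lx \<in> terminals V E ow"
    and "x \<noteq> ow" and between: "d ow x + d x lx = d ow lx"
  shows "ow \<in> M2 V E"
proof (rule ccontr)
  assume not_M2: "ow \<notin> M2 V E"
  \<comment> \<open>then lx is the only terminal vertex of ow, so every other branch at ow contains a vertex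
    of M2; these vertices force d ow x = d ow y and then resolve x and y\<close>
  have owV: "ow \<in> V" and lxV: "lx \<in> V" using major_in_V ow lt terminals_subset_V by auto
  obtain e where e: "E ow e" "lx \<in> branch ow e"
    using branch_exists owV lxV terminal_neq_major[OF ow lt] by metis
  have xe: "x \<in> branch ow e" using between_in_branch[OF e x \<open>x \<noteq> ow\<close> between] .
  have M2_beside: "\<exists>v\<in>branch ow c. v \<in> M2 V E" if "E ow c" "c \<noteq> e" for c
    using branch_contains_M2_unless_terminal[OF that(1)] terminals_of_major_not_M2[OF ow not_M2 lt]
      branch_unique[OF e(1) that(1) e(2)] that(2) by metis
  obtain c where c: "E ow c" "c \<noteq> e" "y \<notin> branch ow c"
    using major_has_two_branches_away[OF ow y(1)] by metis
  obtain v where v: "v \<in> branch ow c" "v \<in> M2 V E" using M2_beside c by blast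
  have "x \<notin> branch ow c" using branch_unique[OF e(1) c(1) xe] c(2) by blast
  then have same: "d ow x = d ow y"
    using equidistant_from_other_branch[OF c(1) v(1) x _ y(1) c(3)] equidistant v(2) by blast
  have "y \<noteq> ow" using same dist_self dist_eq_0_iff owV x \<open>x \<noteq> ow\<close> by metis
  then obtain f where f: "E ow f" "y \<in> branch ow f" using branch_exists owV y(1) by metis
  show False
  proof (cases "f = e")
    case True
    \<comment> \<open>x and y lie on the geodesic from ow to lx at the same distance from ow\<close>
    obtain P where P: "geodesic P ow lx" using geodesic_exists owV lxV by blast
    have "x \<in> set P" "y \<in> set P"
      using branch_subset_geodesic_to_terminal[OF owV lt e P] xe f(2) True by auto
    then show False using geodesic_index[OF P owV] same y(2) by metis
  next
    case False
    obtain v' where v': "v' \<in> branch ow f" "v' \<in> M2 V E" using M2_beside f(1) False by blast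
    have "x \<notin> branch ow f" using branch_unique[OF e(1) f(1) xe] False by blast
    then have "d y v' < d x v'" using closer_within_branch[OF f v'(1) x] same by blast
    then show False using equidistant v'(2) by simp
  qed
qed

lemma equidistant_pair_separated_by_M2_terminal:
  assumes x: "x \<in> V" and y: "y \<in> V" "y \<noteq> x"
    and equidistant: "\<forall>v\<in>M2 V E. d x v = d y v" and "major V E w0"
  obtains v l where "v \<in> M2 V E" "l \<in> terminals V E v" "d x l < d y l"
proof -
  obtain a where a: "E x a" "y \<in> branch x a" using branch_exists x y by metis
  have aV: "a \<in> V" using edge_in_V a(1) by blast
  have closer: "d z x < d z y" if "z \<in> branch a x" for z
    using branch_behind_closer[OF a that] .
  have "z \<notin> M2 V E" if "z \<in> branch a x" for z
    using closer[OF that] equidistant dist_commute x y(1) branch_subset_V that by fastforce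
  then have no_major: "\<forall>z\<in>branch a x. \<not> major V E z"
    using branch_with_major_contains_M2[OF edge_sym[OF a(1)]] by metis
  \<comment> \<open>a leaf on x's side of the edge xa; the major vertex ow of which it is a terminal vertex
    lies beyond a, so x lies between ow and the leaf\<close>
  obtain lx where lx: "lx \<in> branch a x" "leaf V E lx"
    using branch_contains_leaf[OF edge_sym[OF a(1)]] by blast
  obtain ow where ow: "major V E ow" "lx \<in> terminals V E ow"
    using leaf_is_terminal_of_nearest_major[OF lx(2) assms(5)] by blast
  have owV: "ow \<in> V" and lxV: "lx \<in> V" using major_in_V ow(1) lx(1) branch_subset_V by auto
  have "ow \<notin> branch a x" using no_major ow(1) by blast
  have xx: "x \<in> branch a x" using in_own_branch edge_sym a(1) by blast
  have "d lx ow = d lx a + d a ow" "d x ow = d x a + d a ow" "d a lx = d x lx + 1"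
    using dist_via_root[OF edge_sym[OF a(1)] _ owV \<open>ow \<notin> branch a x\<close>] lx(1) xx
      branch_dist[OF edge_sym[OF a(1)] lx(1)] by auto
  moreover have "d x a = 1" using dist_edge a(1) .
  moreover have "d a lx = d lx a" "d x lx = d lx x" "d ow lx = d lx ow" "d ow x = d x ow"
    using dist_commute aV lxV x owV by auto
  ultimately have "d ow x + d x lx = d ow lx" by linarith
  moreover have "x \<noteq> ow" using xx \<open>ow \<notin> branch a x\<close> by blast
  ultimately have "ow \<in> M2 V E" using owner_in_M2[OF x y equidistant ow] by blast
  moreover have "d x lx < d y lx" using closer[OF lx(1)] dist_commute x y(1) lxV by simp
  ultimately show ?thesis using that ow(2) by blast
qed

definition M2_terminals :: "'a set" where
  "M2_terminals = (\<Union>v\<in>M2 V E. terminals V E v)"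

lemma finite_M2: "finite (M2 V E)"
  using finite_V M2_major major_in_V by (meson finite_subset subsetI)

lemma M2_terminals_subset_V: "M2_terminals \<subseteq> V"
  unfolding M2_terminals_def using terminals_subset_V by blast

lemma card_M2_terminals: "card M2_terminals = (\<Sum>v\<in>M2 V E. ter V E v)"
  unfolding M2_terminals_def ter_def using finite_M2 finite_terminals terminals_disjoint M2_major
  by (intro card_UN_disjoint) auto

lemma M2_terminals_resolve_twice:
  assumes x: "x \<in> V" and y: "y \<in> V" and "x \<noteq> y" and "major V E w0"
  shows "2 \<le> card (Rset V E x y \<inter> M2_terminals)"
proof -
  have fin: "finite (Rset V E x y \<inter> M2_terminals)" using finite_V unfolding Rset_def by simp
  show ?thesis
  proof (cases "\<exists>v\<in>M2 V E. d x v \<noteq> d y v")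
    case True
    then obtain v where v: "v \<in> M2 V E" "d x v \<noteq> d y v" by blast
    have "terminals V E v \<subseteq> Rset V E x y \<inter> M2_terminals"
      using terminal_resolves_if_major_resolves[OF M2_major[OF v(1)] _ x y v(2)]
        terminals_subset_V v(1) unfolding Rset_def M2_terminals_def by blast
    then have "card (terminals V E v) \<le> card (Rset V E x y \<inter> M2_terminals)"
      using fin by (rule card_mono[rotated])
    then show ?thesis using v unfolding M2_def ter_def by auto
  next
    case False
    obtain v1 l1 where "v1 \<in> M2 V E" "l1 \<in> terminals V E v1" "d x l1 < d y l1"
      using equidistant_pair_separated_by_M2_terminal[OF x y] False assms(3,4) by metis
    moreover obtain v2 l2 where "v2 \<in> M2 V E" "l2 \<in> terminals V E v2" "d y l2 < d x l2"
      using equidistant_pair_separated_by_M2_terminal[OF y x] False assms(3,4) by metis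
    ultimately have "{l1, l2} \<subseteq> Rset V E x y \<inter> M2_terminals" "l1 \<noteq> l2"
      using terminals_subset_V unfolding Rset_def M2_terminals_def by auto
    then show ?thesis using card_mono[OF fin, of "{l1, l2}"] by simp
  qed
qed

lemma resolving_half_indicator:
  assumes "major V E w0"
  shows "resolving_function V E (\<lambda>z. if z \<in> M2_terminals then 1/2 else 0)"
  unfolding resolving_function_def
proof (intro conjI ballI impI)
  fix x y assume "x \<in> V" "y \<in> V" "x \<noteq> y"
  have "finite (Rset V E x y)" using finite_V unfolding Rset_def by simp
  then have "(\<Sum>z\<in>Rset V E x y. if z \<in> M2_terminals then 1/2 else 0)
      = real (card (Rset V E x y \<inter> M2_terminals)) / 2"
    by (simp add: sum.If_cases Int_def)
  then show "1 \<le> (\<Sum>z\<in>Rset V E x y. if z \<in> M2_terminals then 1/2 else 0 :: real)"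
    using M2_terminals_resolve_twice[OF \<open>x \<in> V\<close> \<open>y \<in> V\<close> \<open>x \<noteq> y\<close> assms] by simp
qed auto

lemma fdim_le_half_ter_sum:
  assumes "major V E w0"
  shows "fdim V E \<le> (\<Sum>v\<in>M2 V E. real (ter V E v) / 2)"
proof -
  have "(\<Sum>z\<in>V. if z \<in> M2_terminals then 1/2 else 0) = real (card M2_terminals) / 2"
    using finite_V M2_terminals_subset_V by (simp add: sum.If_cases Int_absorb1)
  also have "\<dots> = (\<Sum>v\<in>M2 V E. real (ter V E v) / 2)"
    by (simp add: card_M2_terminals sum_divide_distrib)
  finally show ?thesis using fdim_le_sum[OF resolving_half_indicator[OF assms]] by simp
qed

lemma sum_Tv_le_sum:
  fixes g :: "'a \<Rightarrow> real"
  assumes "\<forall>z\<in>V. 0 \<le> g z"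
  shows "(\<Sum>v\<in>M2 V E. sum g (Tv V E v - {v})) \<le> sum g V"
proof -
  have "(\<Sum>v\<in>M2 V E. sum g (Tv V E v - {v})) = sum g (\<Union>v\<in>M2 V E. Tv V E v - {v})"
    using finite_M2 finite_Tv M2_major major_in_V Tv_disjoint
    by (intro sum.UNION_disjoint[symmetric]) auto
  also have "\<dots> \<le> sum g V"
  proof (rule sum_mono2[OF finite_V])
    show "(\<Union>v\<in>M2 V E. Tv V E v - {v}) \<subseteq> V" using Tv_subset_V M2_major major_in_V by blast
  qed (use assms in blast)
  finally show ?thesis .
qed

lemma sum_Tv_minus_root:
  fixes g :: "'a \<Rightarrow> real"
  shows "(\<Sum>v\<in>M2 V E. sum g (Tv V E v) - g v) = (\<Sum>v\<in>M2 V E. sum g (Tv V E v - {v}))"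
proof (rule sum.cong)
  fix v assume "v \<in> M2 V E"
  then have "finite (Tv V E v)" "v \<in> Tv V E v"
    using finite_Tv M2_major major_in_V unfolding Tv_def by blast+
  then show "sum g (Tv V E v) - g v = sum g (Tv V E v - {v})" by (simp add: sum.remove)
qed simp

end

theorem lemma3p13:
  fixes V :: "'a set" and E :: "'a \<Rightarrow> 'a \<Rightarrow> bool" and g :: "'a \<Rightarrow> real"
  assumes "tree V E"
    and "ex V E \<ge> 1"
    and "min_resolving_function V E g"
  shows "(\<forall>v\<in>M2 V E. sum g (Tv V E v - {v}) = real (ter V E v) / 2)
       \<and> (\<Sum>v\<in>M2 V E. sum g (Tv V E v) - g v) = fdim V E"
proof -
  interpret tree_graph V E by unfold_locales (fact assms(1))
  have "ext_major V E \<noteq> {}" using assms(2) unfolding ex_def by auto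
  then obtain w0 where "major V E w0" unfolding ext_major_def by blast
  have g: "resolving_function V E g" "sum g V = fdim V E"
    using assms(3) unfolding min_resolving_function_def by auto
  have "(\<forall>v\<in>M2 V E. sum g (Tv V E v - {v}) = real (ter V E v) / 2)
      \<and> (\<Sum>v\<in>M2 V E. sum g (Tv V E v - {v})) = fdim V E"
  proof (rule sum_squeeze[OF finite_M2])
    show "\<forall>v\<in>M2 V E. real (ter V E v) / 2 \<le> sum g (Tv V E v - {v})"
      using half_ter_le_sum_Tv g(1) by blast
    have "\<forall>z\<in>V. 0 \<le> g z" using g(1) unfolding resolving_function_def by blast
    then show "(\<Sum>v\<in>M2 V E. sum g (Tv V E v - {v})) \<le> fdim V E"
      using sum_Tv_le_sum g(2) by metis
    show "fdim V E \<le> (\<Sum>v\<in>M2 V E. real (ter V E v) / 2)"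
      using fdim_le_half_ter_sum[OF \<open>major V E w0\<close>] .
  qed
  then show ?thesis using sum_Tv_minus_root by simp
qed

end
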